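(* Under the standing setting and assumptions (A1)–(A3) described in the context, assume $\mathcal A^\infty\cap\ker(\pi)=\{0\}$. Then $\mathcal R$ is upper semicontinuous at every point of $\mathcal X$.
   Context: Let $\mathcal X$ be a Hausdorff, first countable, locally convex topological vector space over $\mathbb R$, partially ordered by a partial order $\geq$ with positive cone $\mathcal X_+=\{X\in\mathcal X: X\geq 0\}$. Let $\mathcal M\subset\mathcal X$ be a vector subspace with $1<\dim\mathcal M<\infty$, carrying the relative topology, and let $\pi:\mathcal M\to\mathbb R$ be linear with $\ker(\pi)=\{Z\in\mathcal M:\pi(Z)=0\}$. Standing assumptions: (A1) there is $U\in\mathcal M\cap\mathcal X_+$ with $\pi(U)=1$; (A2) $\mathcal A\subsetneq\mathcal X$ is closed, contains $0$, and satisfies $\mathcal A+\mathcal X_+\subset\mathcal A$; (A3) the map $\rho(X)=\inf\{\pi(Z): Z\in\mathcal M,\ X+Z\in\mathcal A\}$ is finitely valued and continuous on $\mathcal X$. The optimal payoff map is $\mathcal R(X)=\{Z\in\mathcal M: X+Z\in\mathcal A,\ \pi(Z)=\rho(X)\}$. The asymptotic cone is $\mathcal A^\infty=\bigcap_{\varepsilon>0}\mathrm{cl}\{\lambda X:\lambda\in[0,\varepsilon],X\in\mathcal A\}$. $\mathcal R$ is upper semicontinuous at $X$ if for every open $\mathcal U\subset\mathcal M$ with $\mathcal R(X)\subset\mathcal U$ there is an open neighborhood $\mathcal U_X$ of $X$ with $\mathcal R(Y)\subset\mathcal U$ for all $Y\in\mathcal U_X$. *)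

theory Defs
  imports "HOL-Analysis.Analysis"
begin

text \<open>Hausdorff and first countability come from the type classes t2_space and
first_countable_topology; here we require that the topology is a vector topology
(continuous addition and scalar multiplication) which is locally convex.\<close>

definition locally_convex_tvs :: "('a::{real_vector,topological_space}) itself \<Rightarrow> bool" where
  "locally_convex_tvs _ \<longleftrightarrow>
     continuous_on UNIV (\<lambda>(x::'a, y::'a). x + y) \<and>
     continuous_on UNIV (\<lambda>(c::real, x::'a). c *\<^sub>R x) \<and>
     (\<forall>U::'a set. open U \<and> 0 \<in> U \<longrightarrow> (\<exists>V. open V \<and> convex V \<and> 0 \<in> V \<and> V \<subseteq> U))"

definition partial_order_rel :: "('a \<Rightarrow> 'a \<Rightarrow> bool) \<Rightarrow> bool" where
  "partial_order_rel ge \<longleftrightarrow> (\<forall>x. ge x x) \<and> (\<forall>x y. ge x y \<and> ge y x \<longrightarrow> x = y)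
     \<and> (\<forall>x y z. ge x y \<and> ge y z \<longrightarrow> ge x z)"

definition pos_cone :: "('a::real_vector \<Rightarrow> 'a \<Rightarrow> bool) \<Rightarrow> 'a set" where
  "pos_cone ge = {x. ge x 0}"

definition linear_on :: "'a::real_vector set \<Rightarrow> ('a \<Rightarrow> real) \<Rightarrow> bool" where
  "linear_on M \<pi> \<longleftrightarrow> (\<forall>x\<in>M. \<forall>y\<in>M. \<pi> (x + y) = \<pi> x + \<pi> y) \<and>
                      (\<forall>c. \<forall>x\<in>M. \<pi> (c *\<^sub>R x) = c * \<pi> x)"

definition rho :: "'a::real_vector set \<Rightarrow> ('a \<Rightarrow> real) \<Rightarrow> 'a set \<Rightarrow> 'a \<Rightarrow> real" where
  "rho M \<pi> A X = Inf {\<pi> Z | Z. Z \<in> M \<and> X + Z \<in> A}"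

definition rho_finite :: "'a::real_vector set \<Rightarrow> ('a \<Rightarrow> real) \<Rightarrow> 'a set \<Rightarrow> bool" where
  "rho_finite M \<pi> A \<longleftrightarrow> (\<forall>X. {\<pi> Z | Z. Z \<in> M \<and> X + Z \<in> A} \<noteq> {} \<and>
                                bdd_below {\<pi> Z | Z. Z \<in> M \<and> X + Z \<in> A})"

definition opt_payoff :: "'a::real_vector set \<Rightarrow> ('a \<Rightarrow> real) \<Rightarrow> 'a set \<Rightarrow> 'a \<Rightarrow> 'a set" where
  "opt_payoff M \<pi> A X = {Z \<in> M. X + Z \<in> A \<and> \<pi> Z = rho M \<pi> A X}"

definition asymptotic_cone :: "'a::{real_vector,topological_space} set \<Rightarrow> 'a set" where
  "asymptotic_cone A = (\<Inter>\<epsilon>\<in>{\<epsilon>::real. \<epsilon> > 0}. closure {l *\<^sub>R X | l X. l \<in> {0..\<epsilon>} \<and> X \<in> A})"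

definition usc_at :: "'a::topological_space set \<Rightarrow> ('a \<Rightarrow> 'a set) \<Rightarrow> 'a \<Rightarrow> bool" where
  "usc_at M R X \<longleftrightarrow> (\<forall>U. openin (top_of_set M) U \<and> R X \<subseteq> U \<longrightarrow>
      (\<exists>V. open V \<and> X \<in> V \<and> (\<forall>Y\<in>V. R Y \<subseteq> U)))"

end

theory Submission
  imports Defs
begin

text \<open>Suppose \<open>Y\<^sub>n \<rightarrow> X\<close> and \<open>Z\<^sub>n \<in> R(Y\<^sub>n)\<close>. Expand \<open>Z\<^sub>n\<close> in a basis of the finite-dimensional
space \<open>M\<close>. If the coordinates stay bounded, a subsequence converges, and by closedness of \<open>A\<close>
and continuity of \<open>\<rho>\<close> its limit lies in \<open>R(X)\<close>. If they were unbounded, normalising by their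
size would produce, in the limit, a nonzero element of \<open>M\<close> lying in the asymptotic cone of \<open>A\<close>
(being a limit of \<open>t\<^sub>n (Y\<^sub>n + Z\<^sub>n)\<close> with \<open>t\<^sub>n \<rightarrow> 0\<close>) and in \<open>ker \<pi>\<close> (since
\<open>\<pi>(t\<^sub>n Z\<^sub>n) = t\<^sub>n \<rho>(Y\<^sub>n) \<rightarrow> 0\<close>), which the hypothesis excludes. Since the space is first
countable, this sequential statement is upper semicontinuity.\<close>

lemma tvs_tendsto_add:
  fixes f g :: "'b \<Rightarrow> 'a::{real_vector,topological_space}"
  assumes "locally_convex_tvs TYPE('a)" "(f \<longlongrightarrow> a) F" "(g \<longlongrightarrow> b) F"
  shows "((\<lambda>n. f n + g n) \<longlongrightarrow> a + b) F"
proof -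
  have "continuous_on UNIV (\<lambda>(x::'a, y::'a). x + y)"
    using assms(1) unfolding locally_convex_tvs_def by blast
  from continuous_on_tendsto_compose[OF this tendsto_Pair[OF assms(2,3)]] show ?thesis
    by simp
qed

lemma tvs_tendsto_scaleR:
  fixes g :: "'b \<Rightarrow> 'a::{real_vector,topological_space}"
  assumes "locally_convex_tvs TYPE('a)" "(f \<longlongrightarrow> a) F" "(g \<longlongrightarrow> b) F"
  shows "((\<lambda>n. f n *\<^sub>R g n) \<longlongrightarrow> a *\<^sub>R b) F"
proof -
  have "continuous_on UNIV (\<lambda>(c::real, x::'a). c *\<^sub>R x)"
    using assms(1) unfolding locally_convex_tvs_def by blast
  from continuous_on_tendsto_compose[OF this tendsto_Pair[OF assms(2,3)]] show ?thesis
    by simp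
qed

lemma tvs_tendsto_sum_scaleR:
  fixes B :: "'a::{real_vector,topological_space} set"
  assumes "locally_convex_tvs TYPE('a)" "finite B"
    and "\<And>b. b \<in> B \<Longrightarrow> ((\<lambda>n. c n b) \<longlongrightarrow> l b) F"
  shows "((\<lambda>n. \<Sum>b\<in>B. c n b *\<^sub>R b) \<longlongrightarrow> (\<Sum>b\<in>B. l b *\<^sub>R b)) F"
  using assms(2,3)
proof (induction B rule: finite_induct)
  case empty
  then show ?case by simp
next
  case (insert x B)
  have "((\<lambda>n. c n x *\<^sub>R x + (\<Sum>b\<in>B. c n b *\<^sub>R b)) \<longlongrightarrow> l x *\<^sub>R x + (\<Sum>b\<in>B. l b *\<^sub>R b)) F"
    using insert by (intro tvs_tendsto_add tvs_tendsto_scaleR assms(1)) auto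
  then show ?case using insert by simp
qed

lemma linear_on_sum_scaleR:
  assumes "subspace M" "linear_on M \<pi>" "finite B" "B \<subseteq> M"
  shows "\<pi> (\<Sum>b\<in>B. c b *\<^sub>R b) = (\<Sum>b\<in>B. c b * \<pi> b)"
  using assms(3,4)
proof (induction B rule: finite_induct)
  case empty
  have "\<pi> (0 *\<^sub>R 0) = 0 * \<pi> 0"
    using assms unfolding linear_on_def by (metis subspace_0)
  then show ?case by simp
next
  case (insert x B)
  have "(\<Sum>b\<in>B. c b *\<^sub>R b) \<in> M" "c x *\<^sub>R x \<in> M"
    using insert assms(1) by (auto intro: subspace_sum subspace_scale)
  then have "\<pi> (\<Sum>b\<in>insert x B. c b *\<^sub>R b) = c x * \<pi> x + \<pi> (\<Sum>b\<in>B. c b *\<^sub>R b)"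
    using assms(2) insert unfolding linear_on_def by simp
  then show ?case using insert by simp
qed

lemma linear_on_tendsto_sum_scaleR:
  assumes "subspace M" "linear_on M \<pi>" "finite B" "B \<subseteq> M"
    and "\<And>b. b \<in> B \<Longrightarrow> ((\<lambda>n. c n b) \<longlongrightarrow> l b) F"
  shows "((\<lambda>n. \<pi> (\<Sum>b\<in>B. c n b *\<^sub>R b)) \<longlongrightarrow> \<pi> (\<Sum>b\<in>B. l b *\<^sub>R b)) F"
  unfolding linear_on_sum_scaleR[OF assms(1-4)] by (intro tendsto_intros assms(5))

lemma bounded_coordinates_convergent_subseq:
  fixes c :: "nat \<Rightarrow> 'a \<Rightarrow> real"
  assumes "finite B" "\<And>n. (\<Sum>b\<in>B. \<bar>c n b\<bar>) \<le> K"
  obtains l r where "strict_mono r" "\<And>b. b \<in> B \<Longrightarrow> (\<lambda>n. c (r n) b) \<longlonglongrightarrow> l b"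
proof -
  have bounded: "bounded ((\<lambda>x. x b) ` range c)" if "b \<in> B" for b
  proof -
    have "\<bar>c n b\<bar> \<le> K" for n
      using member_le_sum[of b B "\<lambda>b. \<bar>c n b\<bar>"] that assms order_trans by fastforce
    then show ?thesis unfolding bounded_real by auto
  qed
  have "\<exists>l r. strict_mono r \<and>
     (\<forall>\<epsilon>>0. eventually (\<lambda>n. \<forall>b\<in>B. dist (c (r n) b) (l b) < \<epsilon>) sequentially)"
    using compact_lemma_general[where proj="\<lambda>x b. x b" and unproj=id, OF assms(1) bounded]
    by auto
  then obtain l r where "strict_mono r"
    and close: "\<And>\<epsilon>. \<epsilon> > 0 \<Longrightarrow> eventually (\<lambda>n. \<forall>b\<in>B. dist (c (r n) b) (l b) < \<epsilon>) sequentially"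
    by blast
  show ?thesis
  proof (rule that[of r l])
    show "(\<lambda>n. c (r n) b) \<longlonglongrightarrow> l b" if "b \<in> B" for b
      by (rule tendstoI, rule eventually_mono[OF close]) (use that in auto)
  qed fact
qed

lemma not_bdd_above_reindex_gt:
  fixes N :: "nat \<Rightarrow> real"
  assumes "\<not> bdd_above (range N)"
  obtains s where "filterlim s sequentially sequentially" "\<And>n. real n < N (s n)"
proof -
  have "\<exists>n\<ge>m. real m < N n" for m
  proof -
    have "UNIV = {..<m} \<union> {m..}" by auto
    then have "range N = N ` {..<m} \<union> N ` {m..}" by (metis image_Un)
    then have "\<not> bdd_above (N ` {m..})" using assms by simp
    then show ?thesis by (auto simp: bdd_above_def not_le)
  qed
  then obtain s where s: "\<And>m. s m \<ge> m" "\<And>m. real m < N (s m)" by metis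
  have "filterlim s sequentially sequentially"
    by (rule filterlim_at_top_mono[OF filterlim_ident]) (use s in auto)
  then show ?thesis using s(2) by (rule that)
qed

lemma scaled_limit_in_asymptotic_cone:
  fixes X :: "nat \<Rightarrow> 'a::{real_vector,topological_space}"
  assumes "t \<longlonglongrightarrow> 0" "\<And>n. t n \<ge> 0" "\<And>n. X n \<in> A" "(\<lambda>n. t n *\<^sub>R X n) \<longlonglongrightarrow> W"
  shows "W \<in> asymptotic_cone A"
  unfolding asymptotic_cone_def
proof (intro INT_I)
  fix \<epsilon> :: real assume "\<epsilon> \<in> {\<epsilon>. \<epsilon> > 0}"
  then have "eventually (\<lambda>n. t n < \<epsilon>) sequentially"
    using order_tendstoD(2)[OF assms(1)] by simp
  then have "eventually (\<lambda>n. t n *\<^sub>R X n \<in> {l *\<^sub>R X | l X. l \<in> {0..\<epsilon>} \<and> X \<in> A}) sequentially"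
    by eventually_elim (use assms(2,3) in force)
  then have "eventually (\<lambda>n. t n *\<^sub>R X n \<in> closure {l *\<^sub>R X | l X. l \<in> {0..\<epsilon>} \<and> X \<in> A}) sequentially"
    by (rule eventually_mono) (rule closure_subset[THEN subsetD])
  then show "W \<in> closure {l *\<^sub>R X | l X. l \<in> {0..\<epsilon>} \<and> X \<in> A}"
    by (intro Lim_in_closed_set[OF closed_closure _ _ assms(4)]) auto
qed

lemma opt_payoff_limit:
  fixes Y Z :: "nat \<Rightarrow> 'a::{real_vector,t2_space}"
  assumes "locally_convex_tvs TYPE('a)"
    and "closed A" "continuous_on UNIV (rho M \<pi> A)"
    and "\<And>n. Z n \<in> opt_payoff M \<pi> A (Y n)" "Y \<longlonglongrightarrow> X"
    and "Z \<longlonglongrightarrow> Z\<^sub>0" "(\<lambda>n. \<pi> (Z n)) \<longlonglongrightarrow> \<pi> Z\<^sub>0" "Z\<^sub>0 \<in> M"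
  shows "Z\<^sub>0 \<in> opt_payoff M \<pi> A X"
proof -
  have "X + Z\<^sub>0 \<in> A"
    using assms(4) unfolding opt_payoff_def
    by (intro Lim_in_closed_set[OF assms(2) _ _ tvs_tendsto_add[OF assms(1,5,6)]]) auto
  moreover have "(\<lambda>n. \<pi> (Z n)) \<longlonglongrightarrow> rho M \<pi> A X"
    using assms(4) continuous_on_tendsto_compose[OF assms(3,5)] by (simp add: opt_payoff_def)
  then have "\<pi> Z\<^sub>0 = rho M \<pi> A X"
    using assms(7) LIMSEQ_unique by blast
  ultimately show ?thesis using assms(8) unfolding opt_payoff_def by blast
qed

lemma opt_payoff_scaled_limit:
  fixes Y Z :: "nat \<Rightarrow> 'a::{real_vector,t2_space}"
  assumes "locally_convex_tvs TYPE('a)"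
    and "subspace M" "linear_on M \<pi>" "continuous_on UNIV (rho M \<pi> A)"
    and "\<And>n. Z n \<in> opt_payoff M \<pi> A (Y n)" "Y \<longlonglongrightarrow> X"
    and "t \<longlonglongrightarrow> 0" "\<And>n. t n \<ge> 0"
    and "(\<lambda>n. t n *\<^sub>R Z n) \<longlonglongrightarrow> W" "(\<lambda>n. \<pi> (t n *\<^sub>R Z n)) \<longlonglongrightarrow> \<pi> W"
  shows "W \<in> asymptotic_cone A" "\<pi> W = 0"
proof -
  have "(\<lambda>n. t n *\<^sub>R (Y n + Z n)) \<longlonglongrightarrow> 0 *\<^sub>R X + W"
    unfolding scaleR_right_distrib
    by (intro tvs_tendsto_add tvs_tendsto_scaleR assms(1,6,7,9))
  then show "W \<in> asymptotic_cone A"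
    using assms(5) unfolding opt_payoff_def
    by (intro scaled_limit_in_asymptotic_cone[OF assms(7,8)]) auto
  have "\<pi> (t n *\<^sub>R Z n) = t n * rho M \<pi> A (Y n)" for n
    using assms(3,5) unfolding linear_on_def opt_payoff_def by auto
  moreover have "(\<lambda>n. t n * rho M \<pi> A (Y n)) \<longlonglongrightarrow> 0 * rho M \<pi> A X"
    by (intro tendsto_mult assms(7) continuous_on_tendsto_compose[OF assms(4,6)]) auto
  ultimately show "\<pi> W = 0"
    using assms(10) LIMSEQ_unique by fastforce
qed

lemma independent_sum_scaleR_nonzero:
  assumes "finite B" "independent B" "(\<Sum>b\<in>B. \<bar>l b\<bar>) \<noteq> 0"
  shows "(\<Sum>b\<in>B. l b *\<^sub>R b) \<noteq> 0"
proof
  assume "(\<Sum>b\<in>B. l b *\<^sub>R b) = 0"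
  moreover obtain b where "b \<in> B" "l b \<noteq> 0"
    using assms(3) by (metis abs_zero sum.neutral)
  ultimately show False
    using assms(1,2) dependent_finite by blast
qed

lemma unbounded_coordinates_normalized_limit:
  fixes c :: "nat \<Rightarrow> 'a \<Rightarrow> real"
  assumes "finite B" "\<And>n. N n = (\<Sum>b\<in>B. \<bar>c n b\<bar>)" "\<not> bdd_above (range N)"
  obtains s l where "filterlim s sequentially sequentially" "\<And>n. N (s n) > 0"
    "(\<lambda>n. inverse (N (s n))) \<longlonglongrightarrow> 0"
    "\<And>b. b \<in> B \<Longrightarrow> (\<lambda>n. c (s n) b / N (s n)) \<longlonglongrightarrow> l b" "(\<Sum>b\<in>B. \<bar>l b\<bar>) = 1"
proof -
  obtain s\<^sub>0 where s\<^sub>0: "filterlim s\<^sub>0 sequentially sequentially" "\<And>n. real n < N (s\<^sub>0 n)"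
    using not_bdd_above_reindex_gt[OF assms(3)] by blast
  have pos: "N (s\<^sub>0 n) > 0" for n
    using s\<^sub>0(2)[of n] of_nat_0_le_iff order_le_less_trans by blast
  define w where "w n b = c (s\<^sub>0 n) b / N (s\<^sub>0 n)" for n b
  have w_norm: "(\<Sum>b\<in>B. \<bar>w n b\<bar>) = 1" for n
    using pos[of n] unfolding w_def assms(2) by (simp add: sum_divide_distrib[symmetric])
  obtain l r where r: "strict_mono r" and l: "\<And>b. b \<in> B \<Longrightarrow> (\<lambda>n. w (r n) b) \<longlonglongrightarrow> l b"
    by (rule bounded_coordinates_convergent_subseq[OF assms(1), of w 1]) (auto simp: w_norm)
  show ?thesis
  proof (rule that[of "s\<^sub>0 \<circ> r" l])
    show "filterlim (s\<^sub>0 \<circ> r) sequentially sequentially"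
      using filterlim_compose[OF s\<^sub>0(1) filterlim_subseq[OF r]] by (simp add: o_def)
    have "filterlim (\<lambda>n. N (s\<^sub>0 (r n))) at_top sequentially"
    proof (rule filterlim_at_top_mono[OF filterlim_real_sequentially always_eventually], intro allI)
      show "real n \<le> N (s\<^sub>0 (r n))" for n
        using seq_suble[OF r, of n] s\<^sub>0(2)[of "r n"] by linarith
    qed
    then show "(\<lambda>n. inverse (N ((s\<^sub>0 \<circ> r) n))) \<longlonglongrightarrow> 0"
      by (simp add: tendsto_inverse_0_at_top)
    have "(\<lambda>n. \<Sum>b\<in>B. \<bar>w (r n) b\<bar>) \<longlonglongrightarrow> (\<Sum>b\<in>B. \<bar>l b\<bar>)"
      by (intro tendsto_intros l)
    then show "(\<Sum>b\<in>B. \<bar>l b\<bar>) = 1"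
      unfolding w_norm using LIMSEQ_const_iff by metis
  qed (use pos l in \<open>auto simp: w_def\<close>)
qed

lemma opt_payoff_coordinates_bounded:
  fixes Y Z :: "nat \<Rightarrow> 'a::{real_vector,t2_space}"
  assumes "locally_convex_tvs TYPE('a)"
    and "finite B" "independent B" "B \<subseteq> M" "subspace M" "linear_on M \<pi>"
    and "continuous_on UNIV (rho M \<pi> A)" "asymptotic_cone A \<inter> {Z \<in> M. \<pi> Z = 0} = {0}"
    and "\<And>n. Z n \<in> opt_payoff M \<pi> A (Y n)" "Y \<longlonglongrightarrow> X"
    and "\<And>n. Z n = (\<Sum>b\<in>B. c n b *\<^sub>R b)"
  shows "bdd_above (range (\<lambda>n. \<Sum>b\<in>B. \<bar>c n b\<bar>))"
proof (rule ccontr)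
  define N where "N n = (\<Sum>b\<in>B. \<bar>c n b\<bar>)" for n
  assume "\<not> ?thesis"
  then have "\<not> bdd_above (range N)" by (simp add: N_def[abs_def])
  then obtain s l where s: "filterlim s sequentially sequentially"
    and pos: "\<And>n. N (s n) > 0" and t: "(\<lambda>n. inverse (N (s n))) \<longlonglongrightarrow> 0"
    and l: "\<And>b. b \<in> B \<Longrightarrow> (\<lambda>n. c (s n) b / N (s n)) \<longlonglongrightarrow> l b"
    and l_norm: "(\<Sum>b\<in>B. \<bar>l b\<bar>) = 1"
    by (rule unbounded_coordinates_normalized_limit[where N=N, OF assms(2) N_def]) blast+
  define W where "W = (\<Sum>b\<in>B. l b *\<^sub>R b)"
  have scaled: "inverse (N (s n)) *\<^sub>R Z (s n) = (\<Sum>b\<in>B. (c (s n) b / N (s n)) *\<^sub>R b)" for n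
    unfolding assms(11) by (simp add: scaleR_sum_right divide_inverse mult.commute)
  have conv: "(\<lambda>n. inverse (N (s n)) *\<^sub>R Z (s n)) \<longlonglongrightarrow> W"
    unfolding scaled W_def by (rule tvs_tendsto_sum_scaleR[OF assms(1,2) l])
  have conv_\<pi>: "(\<lambda>n. \<pi> (inverse (N (s n)) *\<^sub>R Z (s n))) \<longlonglongrightarrow> \<pi> W"
    unfolding scaled W_def by (rule linear_on_tendsto_sum_scaleR[OF assms(5,6,2,4) l])
  have "(\<lambda>n. Y (s n)) \<longlonglongrightarrow> X"
    using filterlim_compose[OF assms(10) s] .
  then have "W \<in> asymptotic_cone A" "\<pi> W = 0"
    using opt_payoff_scaled_limit[where Y="\<lambda>n. Y (s n)" and Z="\<lambda>n. Z (s n)",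
        OF assms(1,5,6,7) assms(9) _ t _ conv conv_\<pi>] pos by (auto intro: less_imp_le)
  moreover have "W \<in> M"
    unfolding W_def using assms(4,5) by (auto intro: subspace_sum subspace_scale)
  moreover have "W \<noteq> 0"
    unfolding W_def using independent_sum_scaleR_nonzero[OF assms(2,3)] l_norm by simp
  ultimately show False using assms(8) by blast
qed

lemma opt_payoff_sequence_meets_open:
  fixes Y Z :: "nat \<Rightarrow> 'a::{real_vector,t2_space}"
  assumes tvs: "locally_convex_tvs TYPE('a)"
    and B: "finite B" "independent B" "span B = M" and "linear_on M \<pi>"
    and "closed A" "continuous_on UNIV (rho M \<pi> A)"
    and "asymptotic_cone A \<inter> {Z \<in> M. \<pi> Z = 0} = {0}"
    and Z: "\<And>n. Z n \<in> opt_payoff M \<pi> A (Y n)" and Y: "Y \<longlonglongrightarrow> X"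
    and "open U" "opt_payoff M \<pi> A X \<subseteq> U"
  shows "\<exists>n. Z n \<in> U"
proof -
  have M: "subspace M" "B \<subseteq> M"
    using B(3) subspace_span span_superset by blast+
  have "\<forall>n. \<exists>u. Z n = (\<Sum>b\<in>B. u b *\<^sub>R b)"
    using Z B(3) unfolding opt_payoff_def span_finite[OF B(1)] by blast
  then obtain c where c: "\<And>n. Z n = (\<Sum>b\<in>B. c n b *\<^sub>R b)" by metis
  have "bdd_above (range (\<lambda>n. \<Sum>b\<in>B. \<bar>c n b\<bar>))"
    by (rule opt_payoff_coordinates_bounded[OF tvs B(1,2) M(2,1) assms(5,7,8) Z Y c])
  then obtain l r where r: "strict_mono r" and l: "\<And>b. b \<in> B \<Longrightarrow> (\<lambda>n. c (r n) b) \<longlonglongrightarrow> l b"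
    using bounded_coordinates_convergent_subseq[OF B(1)] by (metis bdd_above.E rangeI)
  define Z\<^sub>0 where "Z\<^sub>0 = (\<Sum>b\<in>B. l b *\<^sub>R b)"
  have conv: "(\<lambda>n. Z (r n)) \<longlonglongrightarrow> Z\<^sub>0"
    unfolding c Z\<^sub>0_def by (rule tvs_tendsto_sum_scaleR[OF tvs B(1) l])
  have "Z\<^sub>0 \<in> opt_payoff M \<pi> A X"
  proof (rule opt_payoff_limit[OF tvs assms(6,7)])
    show "(\<lambda>n. Y (r n)) \<longlonglongrightarrow> X"
      using LIMSEQ_subseq_LIMSEQ[OF Y r] by (simp add: o_def)
    show "(\<lambda>n. \<pi> (Z (r n))) \<longlonglongrightarrow> \<pi> Z\<^sub>0"
      unfolding c Z\<^sub>0_def by (rule linear_on_tendsto_sum_scaleR[OF M(1) assms(5) B(1) M(2) l])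
    show "Z\<^sub>0 \<in> M"
      unfolding Z\<^sub>0_def using M by (auto intro: subspace_sum subspace_scale)
  qed (use Z conv in auto)
  then have "eventually (\<lambda>n. Z (r n) \<in> U) sequentially"
    using topological_tendstoD[OF conv \<open>open U\<close>] assms(12) by blast
  then show ?thesis by (meson eventually_sequentially order_refl)
qed

lemma usc_at_sequentially:
  fixes R :: "'a::first_countable_topology \<Rightarrow> 'a set"
  assumes "\<And>Y. R Y \<subseteq> M"
    and "\<And>Y Z U. Y \<longlonglongrightarrow> X \<Longrightarrow> (\<And>n. Z n \<in> R (Y n)) \<Longrightarrow> open U \<Longrightarrow> R X \<subseteq> U \<Longrightarrow> \<exists>n. Z n \<in> U"
  shows "usc_at M R X"
  unfolding usc_at_def
proof (intro allI impI)
  fix U assume U: "openin (top_of_set M) U \<and> R X \<subseteq> U"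
  then obtain U' where U': "open U'" "U = M \<inter> U'" by (metis openin_open)
  show "\<exists>V. open V \<and> X \<in> V \<and> (\<forall>Y\<in>V. R Y \<subseteq> U)"
  proof (rule ccontr)
    assume none: "\<not> ?thesis"
    obtain V :: "nat \<Rightarrow> 'a set" where V: "\<And>i. open (V i)" "\<And>i. X \<in> V i"
      "\<And>Y. (\<forall>n. Y n \<in> V n) \<Longrightarrow> Y \<longlonglongrightarrow> X"
      by (rule first_countable_topology_class.countable_basis[of X]) auto
    have "\<exists>Y Z. Y \<in> V i \<and> Z \<in> R Y \<and> Z \<notin> U" for i
      using none V(1,2) by (meson subsetI)
    then obtain Y Z where Y: "\<And>i. Y i \<in> V i" and Z: "\<And>i. Z i \<in> R (Y i)" "\<And>i. Z i \<notin> U"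
      by metis
    have "\<exists>n. Z n \<in> U'"
      by (rule assms(2)[OF V(3) Z(1) U'(1)]) (use Y U U' in auto)
    then show False
      using Z assms(1) U'(2) by blast
  qed
qed

theorem mainTheorem16:
  fixes ge :: "'a::{real_vector,t2_space,first_countable_topology} \<Rightarrow> 'a \<Rightarrow> bool"
    and M :: "'a set" and \<pi> :: "'a \<Rightarrow> real" and A :: "'a set"
  assumes "locally_convex_tvs TYPE('a)"
    and "partial_order_rel ge"
    and "subspace M" and "1 < dim M" and "\<exists>B. finite B \<and> span B = M"
    and "linear_on M \<pi>"
    and A1: "\<exists>U\<in>M \<inter> pos_cone ge. \<pi> U = 1"
    and A2: "closed A" "A \<noteq> UNIV" "0 \<in> A" "\<forall>X\<in>A. \<forall>P\<in>pos_cone ge. X + P \<in> A"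
    and A3: "rho_finite M \<pi> A" "continuous_on UNIV (rho M \<pi> A)"
    and "asymptotic_cone A \<inter> {Z \<in> M. \<pi> Z = 0} = {0}"
  shows "\<forall>X. usc_at M (opt_payoff M \<pi> A) X"
proof
  fix X
  obtain B\<^sub>0 where B\<^sub>0: "finite B\<^sub>0" "span B\<^sub>0 = M" using assms(5) by blast
  obtain B where "B \<subseteq> B\<^sub>0" "independent B" "B\<^sub>0 \<subseteq> span B"
    using maximal_independent_subset by blast
  with B\<^sub>0 have B: "finite B" "independent B" "span B = M"
    by (metis finite_subset span_mono span_span subset_antisym)+
  show "usc_at M (opt_payoff M \<pi> A) X"
  proof (rule usc_at_sequentially)
    show "opt_payoff M \<pi> A Y \<subseteq> M" for Y
      unfolding opt_payoff_def by blast
  qed (rule opt_payoff_sequence_meets_open[OF assms(1) B assms(6) A2(1) A3(2) assms(14)])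
qed

end
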